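(* Let $N\ge 1$ and $R\ge 1$, and for each $n=1,\ldots,N$ let $\mathbf{A}^{(n)}\in\mathbb{R}^{I_n\times R}$ be a random matrix with rows $\mathbf{a}^{(n)}_{i_n}\in\mathbb{R}^R$ (written as column vectors), $i_n=1,\ldots,I_n$, all entries having finite second moments. Assume the matrices $\mathbf{A}^{(1)},\ldots,\mathbf{A}^{(N)}$ are independent and that, for all $n$ and all $i_n$, the row vectors $\{\mathbf{a}^{(n)}_{i_n}\}$ are independent. Then $$\mathbb{E}\left[ \Big(\bigodot_n \mathbf{A}^{(n)}\Big)^T \Big(\bigodot_n \mathbf{A}^{(n)}\Big)\right] =\sum_{i_1=1}^{I_1}\cdots\sum_{i_N=1}^{I_N} \mathbb{E}\left[ \mathbf{a}^{(1)}_{i_1}\mathbf{a}^{(1)T}_{i_1}\right]\circledast \mathbb{E}\left[ \mathbf{a}^{(2)}_{i_2}\mathbf{a}^{(2)T}_{i_2}\right]\circledast\cdots\circledast \mathbb{E}\left[ \mathbf{a}^{(N)}_{i_N}\mathbf{a}^{(N)T}_{i_N}\right],$$ where $\mathbb{E}\left[ \mathbf{a}^{(n)}_{i_n}\mathbf{a}^{(n)T}_{i_n}\right] = \mathbb{E}[\mathbf{a}_{i_n}^{(n)}]\mathbb{E}[\mathbf{a}_{i_n}^{(n)}]^T + \mathrm{Var}\big(\mathbf{a}^{(n)}_{i_n}\big)$, with $\mathrm{Var}$ denoting the covariance matrix.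
   Context: $\circledast$ denotes the Hadamard (entrywise) product of matrices of the same size. For matrices $\mathbf{A}\in\mathbb{R}^{I\times K}$, $\mathbf{B}\in\mathbb{R}^{J\times K}$, the Khatri–Rao product $\mathbf{A}\odot\mathbf{B}\in\mathbb{R}^{IJ\times K}$ is the columnwise Kronecker product, and $\bigodot_n \mathbf{A}^{(n)} = \mathbf{A}^{(N)}\odot\mathbf{A}^{(N-1)}\odot\cdots\odot\mathbf{A}^{(1)}$, a matrix of size $\prod_n I_n\times R$ whose rows are exactly the vectors $\mathbf{a}^{(1)}_{i_1}\circledast\cdots\circledast\mathbf{a}^{(N)}_{i_N}$ (transposed) as $(i_1,\ldots,i_N)$ ranges over all index tuples. *)

theory Defs
  imports "HOL-Probability.Probability"
begin

text \<open>Conventions (0-based indices): a family of random matrices is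
  A :: nat => nat => nat => 'a => real, where A n i r w is entry (i,r) of the
  matrix A^(n) (n < N, i < I n, r < R) at outcome w.\<close>

definition index_tuples :: "nat \<Rightarrow> (nat \<Rightarrow> nat) \<Rightarrow> (nat \<Rightarrow> nat) set" where
  "index_tuples N I = PiE {..<N} (\<lambda>n. {..<I n})"

text \<open>Khatri-Rao product of A^(N),...,A^(1): the row indexed by the tuple t is the
  Hadamard product of the rows a^(n)_{t n}; entry in column r.\<close>
definition khatri_rao :: "nat \<Rightarrow> (nat \<Rightarrow> nat \<Rightarrow> nat \<Rightarrow> real) \<Rightarrow> (nat \<Rightarrow> nat) \<Rightarrow> nat \<Rightarrow> real" where
  "khatri_rao N A t r = (\<Prod>n<N. A n (t n) r)"

definition gram :: "'r set \<Rightarrow> ('r \<Rightarrow> nat \<Rightarrow> real) \<Rightarrow> nat \<Rightarrow> nat \<Rightarrow> real" where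
  "gram Rows K j k = (\<Sum>t\<in>Rows. K t j * K t k)"

definition covariance :: "'a measure \<Rightarrow> ('a \<Rightarrow> real) \<Rightarrow> ('a \<Rightarrow> real) \<Rightarrow> real" where
  "covariance M X Y =
     integral\<^sup>L M (\<lambda>w. (X w - integral\<^sup>L M X) * (Y w - integral\<^sup>L M Y))"

end

theory Submission
  imports Defs
begin

text \<open>Expanding the Gram matrix of the Khatri--Rao product row by row, entry $(j,k)$ becomes a
  sum over index tuples $(i_1,\ldots,i_N)$ of products
  $\prod_n a^{(n)}_{i_n j}\, a^{(n)}_{i_n k}$.  The $n$-th factor depends only on $A^{(n)}$, so
  independence of the matrices turns the expectation of each product into the product of the
  expectations $\mathbb{E}[a^{(n)}_{i_n j} a^{(n)}_{i_n k}]$; square integrability makes every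
  term integrable.\<close>

lemma integrable_mult_of_square_integrable:
  fixes X Y :: "'a \<Rightarrow> real"
  assumes "X \<in> borel_measurable M" "Y \<in> borel_measurable M"
    and "integrable M (\<lambda>w. (X w)\<^sup>2)" "integrable M (\<lambda>w. (Y w)\<^sup>2)"
  shows "integrable M (\<lambda>w. X w * Y w)"
proof (rule Bochner_Integration.integrable_bound)
  show "integrable M (\<lambda>w. (X w)\<^sup>2 + (Y w)\<^sup>2)"
    using assms by auto
  show "AE w in M. norm (X w * Y w) \<le> norm ((X w)\<^sup>2 + (Y w)\<^sup>2)"
  proof (rule AE_I2)
    fix w
    have "\<bar>X w * Y w\<bar> \<le> 2 * \<bar>X w\<bar> * \<bar>Y w\<bar>"
      by (simp add: abs_mult)
    also have "\<dots> \<le> (X w)\<^sup>2 + (Y w)\<^sup>2"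
      using sum_squares_bound[of "\<bar>X w\<bar>" "\<bar>Y w\<bar>"] by simp
    finally show "norm (X w * Y w) \<le> norm ((X w)\<^sup>2 + (Y w)\<^sup>2)"
      by simp
  qed
qed (use assms in auto)

lemma (in prob_space) expectation_mult_eq_mult_expectation_plus_covariance:
  fixes X Y :: "'a \<Rightarrow> real"
  assumes "integrable M X" "integrable M Y" "integrable M (\<lambda>w. X w * Y w)"
  shows "expectation (\<lambda>w. X w * Y w) = expectation X * expectation Y + covariance M X Y"
proof -
  let ?a = "expectation X" and ?b = "expectation Y"
  have "covariance M X Y = expectation (\<lambda>w. X w * Y w - ?b * X w - ?a * Y w + ?a * ?b)"
    unfolding covariance_def
    by (rule arg_cong[where f = "integral\<^sup>L M"]) (simp add: fun_eq_iff algebra_simps)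
  also have "\<dots> = expectation (\<lambda>w. X w * Y w - ?b * X w - ?a * Y w) + ?a * ?b"
    using assms by (subst Bochner_Integration.integral_add) (auto simp: prob_space)
  also have "\<dots> = expectation (\<lambda>w. X w * Y w - ?b * X w) - ?a * ?b + ?a * ?b"
    using assms by (subst Bochner_Integration.integral_diff) auto
  also have "\<dots> = expectation (\<lambda>w. X w * Y w) - ?b * ?a"
    using assms by (subst Bochner_Integration.integral_diff) auto
  finally show ?thesis by simp
qed

lemma (in prob_space) indep_vars_mult_components:
  assumes indep: "indep_vars (\<lambda>i. PiM (S i) (\<lambda>_. borel)) X I"
    and "\<And>i. i \<in> I \<Longrightarrow> p i \<in> S i" "\<And>i. i \<in> I \<Longrightarrow> q i \<in> S i"
  shows "indep_vars (\<lambda>_. borel) (\<lambda>i w. X i w (p i) * X i w (q i) :: real) I"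
  using indep_vars_compose2[OF indep, of "\<lambda>i f. f (p i) * f (q i)"] assms(2,3)
  by (auto intro!: borel_measurable_times measurable_component_singleton)

lemma gram_khatri_rao_eq_sum_prod:
  "gram Rows (khatri_rao N A) j k = (\<Sum>t\<in>Rows. \<Prod>n<N. A n (t n) j * A n (t n) k)"
  unfolding gram_def khatri_rao_def by (simp add: prod.distrib)

lemma (in prob_space) expectation_prod_entry_products:
  fixes A :: "nat \<Rightarrow> nat \<Rightarrow> nat \<Rightarrow> 'a \<Rightarrow> real"
  assumes indep: "indep_vars (\<lambda>n. PiM ({..<I n} \<times> {..<R}) (\<lambda>_. borel))
        (\<lambda>n w. \<lambda>p\<in>{..<I n} \<times> {..<R}. A n (fst p) (snd p) w) J"
    and J: "finite J" and t: "\<And>n. n \<in> J \<Longrightarrow> t n < I n" and "j < R" "k < R"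
    and meas: "\<And>n r. n \<in> J \<Longrightarrow> r < R \<Longrightarrow> A n (t n) r \<in> borel_measurable M"
    and sq: "\<And>n r. n \<in> J \<Longrightarrow> r < R \<Longrightarrow> integrable M (\<lambda>w. (A n (t n) r w)\<^sup>2)"
  shows "integrable M (\<lambda>w. \<Prod>n\<in>J. A n (t n) j w * A n (t n) k w)"
    and "expectation (\<lambda>w. \<Prod>n\<in>J. A n (t n) j w * A n (t n) k w)
      = (\<Prod>n\<in>J. expectation (\<lambda>w. A n (t n) j w * A n (t n) k w))"
proof -
  have indep_products: "indep_vars (\<lambda>_. borel) (\<lambda>n w. A n (t n) j w * A n (t n) k w) J"
    using indep_vars_mult_components[OF indep, of "\<lambda>n. (t n, j)" "\<lambda>n. (t n, k)"] t \<open>j < R\<close> \<open>k < R\<close>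
    by (simp cong: indep_vars_cong)
  have integrable_products: "\<And>n. n \<in> J \<Longrightarrow> integrable M (\<lambda>w. A n (t n) j w * A n (t n) k w)"
    using \<open>j < R\<close> \<open>k < R\<close> by (intro integrable_mult_of_square_integrable meas sq)
  show "integrable M (\<lambda>w. \<Prod>n\<in>J. A n (t n) j w * A n (t n) k w)"
    and "expectation (\<lambda>w. \<Prod>n\<in>J. A n (t n) j w * A n (t n) k w)
      = (\<Prod>n\<in>J. expectation (\<lambda>w. A n (t n) j w * A n (t n) k w))"
    using indep_vars_integrable[OF J indep_products integrable_products]
      indep_vars_lebesgue_integral[OF J indep_products integrable_products] by auto
qed

lemma (in prob_space) expectation_gram_khatri_rao:
  fixes A :: "nat \<Rightarrow> nat \<Rightarrow> nat \<Rightarrow> 'a \<Rightarrow> real"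
  assumes meas: "\<And>n i r. n < N \<Longrightarrow> i < I n \<Longrightarrow> r < R \<Longrightarrow> A n i r \<in> borel_measurable M"
    and sq: "\<And>n i r. n < N \<Longrightarrow> i < I n \<Longrightarrow> r < R \<Longrightarrow> integrable M (\<lambda>w. (A n i r w)\<^sup>2)"
    and indep: "indep_vars (\<lambda>n. PiM ({..<I n} \<times> {..<R}) (\<lambda>_. borel))
        (\<lambda>n w. \<lambda>p\<in>{..<I n} \<times> {..<R}. A n (fst p) (snd p) w) {..<N}"
    and j: "j < R" and k: "k < R"
  shows "expectation (\<lambda>w. gram (index_tuples N I) (khatri_rao N (\<lambda>n i r. A n i r w)) j k)
    = (\<Sum>t\<in>index_tuples N I. \<Prod>n<N. expectation (\<lambda>w. A n (t n) j w * A n (t n) k w))"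
proof -
  have term_integrable: "integrable M (\<lambda>w. \<Prod>n<N. A n (t n) j w * A n (t n) k w)"
    and term_expectation: "expectation (\<lambda>w. \<Prod>n<N. A n (t n) j w * A n (t n) k w)
      = (\<Prod>n<N. expectation (\<lambda>w. A n (t n) j w * A n (t n) k w))"
    if "t \<in> index_tuples N I" for t
  proof -
    have bound: "t n < I n" if "n \<in> {..<N}" for n
      using \<open>t \<in> index_tuples N I\<close> that unfolding index_tuples_def by blast
    show "integrable M (\<lambda>w. \<Prod>n<N. A n (t n) j w * A n (t n) k w)"
      "expectation (\<lambda>w. \<Prod>n<N. A n (t n) j w * A n (t n) k w)
        = (\<Prod>n<N. expectation (\<lambda>w. A n (t n) j w * A n (t n) k w))"
      using expectation_prod_entry_products[OF indep finite_lessThan bound j k]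
        meas[OF _ bound] sq[OF _ bound] by simp_all
  qed
  have "expectation (\<lambda>w. gram (index_tuples N I) (khatri_rao N (\<lambda>n i r. A n i r w)) j k)
      = expectation (\<lambda>w. \<Sum>t\<in>index_tuples N I. \<Prod>n<N. A n (t n) j w * A n (t n) k w)"
    by (simp only: gram_khatri_rao_eq_sum_prod)
  also have "\<dots> = (\<Sum>t\<in>index_tuples N I. expectation (\<lambda>w. \<Prod>n<N. A n (t n) j w * A n (t n) k w))"
    using term_integrable by (rule Bochner_Integration.integral_sum)
  also have "\<dots> = (\<Sum>t\<in>index_tuples N I. \<Prod>n<N. expectation (\<lambda>w. A n (t n) j w * A n (t n) k w))"
    using term_expectation by (rule sum.cong[OF refl])
  finally show ?thesis .
qed

theorem theorem1:
  fixes M :: "'a measure"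
    and N R :: nat
    and I :: "nat \<Rightarrow> nat"
    and A :: "nat \<Rightarrow> nat \<Rightarrow> nat \<Rightarrow> 'a \<Rightarrow> real"
  assumes "prob_space M"
    and "N \<ge> 1" and "R \<ge> 1"
    and meas: "\<And>n i r. n < N \<Longrightarrow> i < I n \<Longrightarrow> r < R \<Longrightarrow> A n i r \<in> borel_measurable M"
    and sq: "\<And>n i r. n < N \<Longrightarrow> i < I n \<Longrightarrow> r < R \<Longrightarrow> integrable M (\<lambda>w. (A n i r w)\<^sup>2)"
    and indep_mats: "prob_space.indep_vars M
        (\<lambda>n. PiM ({..<I n} \<times> {..<R}) (\<lambda>_. borel))
        (\<lambda>n w. \<lambda>p\<in>{..<I n} \<times> {..<R}. A n (fst p) (snd p) w) {..<N}"
    and indep_rows: "\<And>n. n < N \<Longrightarrow> prob_space.indep_vars M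
        (\<lambda>i. PiM {..<R} (\<lambda>_. borel))
        (\<lambda>i w. \<lambda>r\<in>{..<R}. A n i r w) {..<I n}"
  shows "\<forall>j<R. \<forall>k<R.
      integral\<^sup>L M (\<lambda>w. gram (index_tuples N I) (\<lambda>t r. khatri_rao N (\<lambda>n i r. A n i r w) t r) j k)
        = (\<Sum>t\<in>index_tuples N I. \<Prod>n<N. integral\<^sup>L M (\<lambda>w. A n (t n) j w * A n (t n) k w))
    \<and> (\<forall>n<N. \<forall>i<I n.
        integral\<^sup>L M (\<lambda>w. A n i j w * A n i k w)
          = integral\<^sup>L M (A n i j) * integral\<^sup>L M (A n i k) + covariance M (A n i j) (A n i k))"
proof (intro allI impI conjI)
  interpret prob_space M by fact
  fix j k assume "j < R" "k < R"
  show "expectation (\<lambda>w. gram (index_tuples N I) (\<lambda>t r. khatri_rao N (\<lambda>n i r. A n i r w) t r) j k)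
      = (\<Sum>t\<in>index_tuples N I. \<Prod>n<N. expectation (\<lambda>w. A n (t n) j w * A n (t n) k w))"
    using expectation_gram_khatri_rao[OF meas sq indep_mats \<open>j < R\<close> \<open>k < R\<close>] by simp
next
  interpret prob_space M by fact
  fix j k n i assume "j < R" "k < R" "n < N" "i < I n"
  then have "integrable M (A n i j)" "integrable M (A n i k)"
    "integrable M (\<lambda>w. A n i j w * A n i k w)"
    by (simp_all add: square_integrable_imp_integrable integrable_mult_of_square_integrable meas sq)
  then show "expectation (\<lambda>w. A n i j w * A n i k w)
      = expectation (A n i j) * expectation (A n i k) + covariance M (A n i j) (A n i k)"
    by (rule expectation_mult_eq_mult_expectation_plus_covariance)
qed

end
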